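(* The adjunction $\text{St}_{\text{Alg}}:\text{AlgKan}\rightleftarrows\text{sTCom}:\text{U}_{\text{Alg}}$ is a Quillen adjunction.
   Context: An algebraic Kan complex is a simplicial set with a chosen filler for every horn; morphisms ($\text{AlgKan}$) are simplicial maps preserving the chosen fillers. $\text{AlgKan}$ carries the model structure of Nikolaus, in which a map is a weak equivalence (resp. fibration) iff its underlying map of simplicial sets is a weak homotopy equivalence (resp. Kan fibration). A simplicial $T$-complex is a simplicial set with marked ("thin") simplices such that degenerate simplices are thin, every horn $\Lambda^n_k$ has a unique filler with thin top simplex, and if all nondegenerate faces of a horn are thin then its composition (the $k$-th face of that filler) is thin; $\text{sTCom}$ has morphisms the thin-preserving simplicial maps and carries the model structure whose weak equivalences and fibrations are the maps that are weak homotopy equivalences, resp. Kan fibrations, of underlying simplicial sets. $\text{U}_{\text{Alg}}$ regards a $T$-complex as an algebraic Kan complex with chosen fillers the thin fillers, and $\text{St}_{\text{Alg}}$ is its left adjoint. *)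

theory Defs
  imports Main
begin

text \<open>The first numeric argument is always the dimension of the source simplex.\<close>

record 'a sset =
  simp :: "nat \<Rightarrow> 'a set"
  fc   :: "nat \<Rightarrow> nat \<Rightarrow> 'a \<Rightarrow> 'a"
  dg   :: "nat \<Rightarrow> nat \<Rightarrow> 'a \<Rightarrow> 'a"

definition is_sset :: "'a sset \<Rightarrow> bool" where
  "is_sset X \<longleftrightarrow>
     (\<forall>n i x. x \<in> simp X (Suc n) \<and> i \<le> Suc n \<longrightarrow> fc X (Suc n) i x \<in> simp X n) \<and>
     (\<forall>n i x. x \<in> simp X n \<and> i \<le> n \<longrightarrow> dg X n i x \<in> simp X (Suc n)) \<and>
     (\<forall>n i j x. x \<in> simp X (Suc (Suc n)) \<and> i < j \<and> j \<le> Suc (Suc n) \<longrightarrow>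
        fc X (Suc n) i (fc X (Suc (Suc n)) j x) = fc X (Suc n) (j - 1) (fc X (Suc (Suc n)) i x)) \<and>
     (\<forall>n i j x. x \<in> simp X n \<and> i \<le> j \<and> j \<le> n \<longrightarrow>
        dg X (Suc n) i (dg X n j x) = dg X (Suc n) (Suc j) (dg X n i x)) \<and>
     (\<forall>n i j x. x \<in> simp X n \<and> i < j \<and> j \<le> n \<longrightarrow>
        fc X (Suc n) i (dg X n j x) = dg X (n - 1) (j - 1) (fc X n i x)) \<and>
     (\<forall>n j x. x \<in> simp X n \<and> j \<le> n \<longrightarrow>
        fc X (Suc n) j (dg X n j x) = x \<and> fc X (Suc n) (Suc j) (dg X n j x) = x) \<and>
     (\<forall>n i j x. x \<in> simp X n \<and> Suc j < i \<and> i \<le> Suc n \<longrightarrow>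
        fc X (Suc n) i (dg X n j x) = dg X (n - 1) j (fc X n (i - 1) x))"

definition is_smap :: "'a sset \<Rightarrow> 'b sset \<Rightarrow> (nat \<Rightarrow> 'a \<Rightarrow> 'b) \<Rightarrow> bool" where
  "is_smap X Y f \<longleftrightarrow>
     (\<forall>n x. x \<in> simp X n \<longrightarrow> f n x \<in> simp Y n) \<and>
     (\<forall>n i x. x \<in> simp X (Suc n) \<and> i \<le> Suc n \<longrightarrow>
        f n (fc X (Suc n) i x) = fc Y (Suc n) i (f (Suc n) x)) \<and>
     (\<forall>n i x. x \<in> simp X n \<and> i \<le> n \<longrightarrow>
        f (Suc n) (dg X n i x) = dg Y n i (f n x))"

definition degenerate :: "'a sset \<Rightarrow> nat \<Rightarrow> 'a \<Rightarrow> bool" where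
  "degenerate X n x \<longleftrightarrow> (\<exists>m i y. n = Suc m \<and> i \<le> m \<and> y \<in> simp X m \<and> x = dg X m i y)"

text \<open>A horn of shape Lambda^n_k in X (n >= 1, k <= n): a compatible family of (n-1)-simplices
  h i for i <= n, i /= k, with d_i h_j = d_(j-1) h_i for i < j; represented extensionally
  (h i = undefined outside the index set), so that choices of fillers are functions of horns.\<close>
definition is_horn :: "'a sset \<Rightarrow> nat \<Rightarrow> nat \<Rightarrow> (nat \<Rightarrow> 'a) \<Rightarrow> bool" where
  "is_horn X n k h \<longleftrightarrow> 1 \<le> n \<and> k \<le> n \<and>
     (\<forall>i. i \<le> n \<and> i \<noteq> k \<longrightarrow> h i \<in> simp X (n - 1)) \<and>
     (\<forall>i j. i < j \<and> j \<le> n \<and> i \<noteq> k \<and> j \<noteq> k \<longrightarrow>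
        fc X (n - 1) i (h j) = fc X (n - 1) (j - 1) (h i)) \<and>
     (\<forall>i. n < i \<or> i = k \<longrightarrow> h i = undefined)"

definition is_filler :: "'a sset \<Rightarrow> nat \<Rightarrow> nat \<Rightarrow> (nat \<Rightarrow> 'a) \<Rightarrow> 'a \<Rightarrow> bool" where
  "is_filler X n k h y \<longleftrightarrow> y \<in> simp X n \<and> (\<forall>i. i \<le> n \<and> i \<noteq> k \<longrightarrow> fc X n i y = h i)"

definition map_horn :: "(nat \<Rightarrow> 'a \<Rightarrow> 'b) \<Rightarrow> nat \<Rightarrow> nat \<Rightarrow> (nat \<Rightarrow> 'a) \<Rightarrow> nat \<Rightarrow> 'b" where
  "map_horn f n k h = (\<lambda>i. if i \<le> n \<and> i \<noteq> k then f (n - 1) (h i) else undefined)"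

definition kan_fibration :: "'a sset \<Rightarrow> 'b sset \<Rightarrow> (nat \<Rightarrow> 'a \<Rightarrow> 'b) \<Rightarrow> bool" where
  "kan_fibration X Y p \<longleftrightarrow>
     (\<forall>n k h y. is_horn X n k h \<and> y \<in> simp Y n \<and>
        (\<forall>i. i \<le> n \<and> i \<noteq> k \<longrightarrow> fc Y n i y = p (n - 1) (h i)) \<longrightarrow>
        (\<exists>x. is_filler X n k h x \<and> p n x = y))"

primrec const_simp :: "'a sset \<Rightarrow> 'a \<Rightarrow> nat \<Rightarrow> 'a" where
  "const_simp X v 0 = v"
| "const_simp X v (Suc n) = dg X n 0 (const_simp X v n)"

definition edge_rel :: "'a sset \<Rightarrow> 'a \<Rightarrow> 'a \<Rightarrow> bool" where
  "edge_rel X x y \<longleftrightarrow> x \<in> simp X 0 \<and> y \<in> simp X 0 \<and>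
     (\<exists>e \<in> simp X 1. fc X 1 1 e = x \<and> fc X 1 0 e = y)"

definition same_component :: "'a sset \<Rightarrow> 'a \<Rightarrow> 'a \<Rightarrow> bool" where
  "same_component X = equivclp (edge_rel X)"

text \<open>Combinatorial homotopy groups of a Kan complex (Kan; May, Simplicial Objects, Def. 3.6):
  elements of pi_n(X,v), n >= 1, are n-simplices all of whose faces are the constant
  (n-1)-simplex at v, modulo homotopy rel boundary.\<close>
definition spherical :: "'a sset \<Rightarrow> 'a \<Rightarrow> nat \<Rightarrow> 'a \<Rightarrow> bool" where
  "spherical X v n x \<longleftrightarrow> x \<in> simp X n \<and> (\<forall>i\<le>n. fc X n i x = const_simp X v (n - 1))"

definition htpy_rel :: "'a sset \<Rightarrow> 'a \<Rightarrow> nat \<Rightarrow> 'a \<Rightarrow> 'a \<Rightarrow> bool" where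
  "htpy_rel X v n x x' \<longleftrightarrow> (\<exists>z \<in> simp X (Suc n).
     fc X (Suc n) n z = x \<and> fc X (Suc n) (Suc n) z = x' \<and>
     (\<forall>i<n. fc X (Suc n) i z = const_simp X v n))"

definition weak_equiv :: "'a sset \<Rightarrow> 'b sset \<Rightarrow> (nat \<Rightarrow> 'a \<Rightarrow> 'b) \<Rightarrow> bool" where
  "weak_equiv X Y f \<longleftrightarrow>
     (\<forall>y \<in> simp Y 0. \<exists>x \<in> simp X 0. same_component Y (f 0 x) y) \<and>
     (\<forall>x \<in> simp X 0. \<forall>x' \<in> simp X 0. same_component Y (f 0 x) (f 0 x') \<longrightarrow> same_component X x x') \<and>
     (\<forall>v \<in> simp X 0. \<forall>n. 1 \<le> n \<longrightarrow>
        (\<forall>y. spherical Y (f 0 v) n y \<longrightarrow>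
             (\<exists>x. spherical X v n x \<and> htpy_rel Y (f 0 v) n (f n x) y)) \<and>
        (\<forall>x x'. spherical X v n x \<and> spherical X v n x' \<and>
             htpy_rel Y (f 0 v) n (f n x) (f n x') \<longrightarrow> htpy_rel X v n x x'))"

definition is_AlgKan :: "'a sset \<Rightarrow> (nat \<Rightarrow> nat \<Rightarrow> (nat \<Rightarrow> 'a) \<Rightarrow> 'a) \<Rightarrow> bool" where
  "is_AlgKan X fill \<longleftrightarrow> is_sset X \<and>
     (\<forall>n k h. is_horn X n k h \<longrightarrow> is_filler X n k h (fill n k h))"

definition is_AlgKan_morphism ::
  "'a sset \<Rightarrow> (nat \<Rightarrow> nat \<Rightarrow> (nat \<Rightarrow> 'a) \<Rightarrow> 'a) \<Rightarrow> 'b sset \<Rightarrow> (nat \<Rightarrow> nat \<Rightarrow> (nat \<Rightarrow> 'b) \<Rightarrow> 'b)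
     \<Rightarrow> (nat \<Rightarrow> 'a \<Rightarrow> 'b) \<Rightarrow> bool" where
  "is_AlgKan_morphism X fX Y fY f \<longleftrightarrow> is_smap X Y f \<and>
     (\<forall>n k h. is_horn X n k h \<longrightarrow> f n (fX n k h) = fY n k (map_horn f n k h))"

text \<open>Model structure on AlgKan (Nikolaus): fibrations / weak equivalences are created by the
  underlying simplicial map.\<close>
definition AlgKan_fibration where
  "AlgKan_fibration X fX Y fY f \<longleftrightarrow> is_AlgKan_morphism X fX Y fY f \<and> kan_fibration X Y f"

definition AlgKan_weq where
  "AlgKan_weq X fX Y fY f \<longleftrightarrow> is_AlgKan_morphism X fX Y fY f \<and> weak_equiv X Y f"

definition is_TComplex :: "'a sset \<Rightarrow> (nat \<Rightarrow> 'a set) \<Rightarrow> bool" where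
  "is_TComplex X T \<longleftrightarrow> is_sset X \<and>
     (\<forall>n. T n \<subseteq> simp X n) \<and> T 0 = {} \<and>
     (\<forall>n i x. x \<in> simp X n \<and> i \<le> n \<longrightarrow> dg X n i x \<in> T (Suc n)) \<and>
     (\<forall>n k h. is_horn X n k h \<longrightarrow> (\<exists>!y. y \<in> T n \<and> is_filler X n k h y)) \<and>
     (\<forall>n k h. is_horn X n k h \<and>
        (\<forall>i. i \<le> n \<and> i \<noteq> k \<and> \<not> degenerate X (n - 1) (h i) \<longrightarrow> h i \<in> T (n - 1)) \<longrightarrow>
        fc X n k (THE y. y \<in> T n \<and> is_filler X n k h y) \<in> T (n - 1))"

definition is_sTCom_morphism ::
  "'a sset \<Rightarrow> (nat \<Rightarrow> 'a set) \<Rightarrow> 'b sset \<Rightarrow> (nat \<Rightarrow> 'b set) \<Rightarrow> (nat \<Rightarrow> 'a \<Rightarrow> 'b) \<Rightarrow> bool" where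
  "is_sTCom_morphism X TX Y TY f \<longleftrightarrow> is_smap X Y f \<and> (\<forall>n x. x \<in> TX n \<longrightarrow> f n x \<in> TY n)"

definition sTCom_fibration where
  "sTCom_fibration X TX Y TY f \<longleftrightarrow> is_sTCom_morphism X TX Y TY f \<and> kan_fibration X Y f"

definition sTCom_weq where
  "sTCom_weq X TX Y TY f \<longleftrightarrow> is_sTCom_morphism X TX Y TY f \<and> weak_equiv X Y f"

text \<open>U_Alg (X,T) = (X, thin fillers); on morphisms U_Alg is the identity on underlying maps.\<close>
definition UAlg_fill :: "'a sset \<Rightarrow> (nat \<Rightarrow> 'a set) \<Rightarrow> nat \<Rightarrow> nat \<Rightarrow> (nat \<Rightarrow> 'a) \<Rightarrow> 'a" where
  "UAlg_fill X T n k h = (THE y. y \<in> T n \<and> is_filler X n k h y)"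

end

theory Submission
  imports Defs
begin

text \<open>Both model structures have their fibrations and weak equivalences created by the
  underlying map of simplicial sets, and \<open>U\<^sub>A\<^sub>l\<^sub>g\<close> does not change underlying maps, so it
  preserves fibrations and trivial fibrations on the nose and is therefore right Quillen.
  The only content is that \<open>U\<^sub>A\<^sub>l\<^sub>g\<close> is well defined: a thin-preserving simplicial map sends
  the thin filler of a horn to a thin filler of the image horn, which by uniqueness of thin
  fillers is the chosen one.\<close>

lemma smap_simp:
  "is_smap X Y f \<Longrightarrow> x \<in> simp X n \<Longrightarrow> f n x \<in> simp Y n"
  unfolding is_smap_def by blast

lemma smap_fc:
  "is_smap X Y f \<Longrightarrow> x \<in> simp X (Suc n) \<Longrightarrow> i \<le> Suc n \<Longrightarrow>
     f n (fc X (Suc n) i x) = fc Y (Suc n) i (f (Suc n) x)"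
  unfolding is_smap_def by blast

lemma is_horn_map_horn:
  assumes f: "is_smap X Y f" and h: "is_horn X n k h"
  shows "is_horn Y n k (map_horn f n k h)"
proof -
  have n: "1 \<le> n" "k \<le> n"
    and faces: "\<And>i. i \<le> n \<Longrightarrow> i \<noteq> k \<Longrightarrow> h i \<in> simp X (n - 1)"
    and compat: "\<And>i j. i < j \<Longrightarrow> j \<le> n \<Longrightarrow> i \<noteq> k \<Longrightarrow> j \<noteq> k \<Longrightarrow>
                   fc X (n - 1) i (h j) = fc X (n - 1) (j - 1) (h i)"
    using h unfolding is_horn_def by auto
  have "fc Y (n - 1) i (map_horn f n k h j) = fc Y (n - 1) (j - 1) (map_horn f n k h i)"
    if ij: "i < j" "j \<le> n" "i \<noteq> k" "j \<noteq> k" for i j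
  proof -
    have "2 \<le> n"
      using ij n(2) by linarith
    then obtain m where m: "n - 1 = Suc m"
      by (cases "n - 1") auto
    have "fc Y (n - 1) i (map_horn f n k h j) = f m (fc X (n - 1) i (h j))"
      using ij m smap_fc[OF f, of "h j" m i] faces[of j] by (simp add: map_horn_def)
    also have "\<dots> = f m (fc X (n - 1) (j - 1) (h i))"
      using compat ij by simp
    also have "\<dots> = fc Y (n - 1) (j - 1) (map_horn f n k h i)"
      using ij m smap_fc[OF f, of "h i" m "j - 1"] faces[of i] by (simp add: map_horn_def)
    finally show ?thesis .
  qed
  moreover have "map_horn f n k h i \<in> simp Y (n - 1)" if "i \<le> n" "i \<noteq> k" for i
    using that faces smap_simp[OF f] by (simp add: map_horn_def)
  ultimately show ?thesis
    using n unfolding is_horn_def by (simp add: map_horn_def)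
qed

lemma is_filler_map_horn:
  assumes f: "is_smap X Y f" and h: "is_horn X n k h" and y: "is_filler X n k h y"
  shows "is_filler Y n k (map_horn f n k h) (f n y)"
proof -
  obtain m where m: "n = Suc m"
    using h unfolding is_horn_def by (cases n) auto
  have "f n y \<in> simp Y n"
    using y smap_simp[OF f] unfolding is_filler_def by blast
  moreover have "fc Y n i (f n y) = map_horn f n k h i" if "i \<le> n" "i \<noteq> k" for i
    using that y m smap_fc[OF f, of y m i] unfolding is_filler_def map_horn_def by simp
  ultimately show ?thesis
    unfolding is_filler_def by blast
qed

lemma UAlg_fill_thin_filler:
  assumes "is_TComplex X T" and "is_horn X n k h"
  shows "UAlg_fill X T n k h \<in> T n" and "is_filler X n k h (UAlg_fill X T n k h)"
proof -
  have "\<exists>!y. y \<in> T n \<and> is_filler X n k h y"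
    using assms unfolding is_TComplex_def by blast
  then have "UAlg_fill X T n k h \<in> T n \<and> is_filler X n k h (UAlg_fill X T n k h)"
    unfolding UAlg_fill_def by (rule theI')
  then show "UAlg_fill X T n k h \<in> T n" and "is_filler X n k h (UAlg_fill X T n k h)"
    by auto
qed

lemma UAlg_fill_unique:
  assumes T: "is_TComplex X T" and h: "is_horn X n k h"
    and "y \<in> T n" and "is_filler X n k h y"
  shows "UAlg_fill X T n k h = y"
proof -
  have "\<exists>!y. y \<in> T n \<and> is_filler X n k h y"
    using T h unfolding is_TComplex_def by blast
  with assms UAlg_fill_thin_filler[OF T h] show ?thesis by blast
qed

lemma is_AlgKan_UAlg:
  assumes "is_TComplex X T"
  shows "is_AlgKan X (UAlg_fill X T)"
  using assms UAlg_fill_thin_filler(2)[OF assms]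
  unfolding is_AlgKan_def is_TComplex_def by blast

lemma is_AlgKan_morphism_UAlg:
  assumes TX: "is_TComplex X TX" and TY: "is_TComplex Y TY"
    and f: "is_sTCom_morphism X TX Y TY f"
  shows "is_AlgKan_morphism X (UAlg_fill X TX) Y (UAlg_fill Y TY) f"
proof -
  have smap: "is_smap X Y f" and thin: "\<And>n x. x \<in> TX n \<Longrightarrow> f n x \<in> TY n"
    using f unfolding is_sTCom_morphism_def by auto
  have "f n (UAlg_fill X TX n k h) = UAlg_fill Y TY n k (map_horn f n k h)"
    if h: "is_horn X n k h" for n k h
    using UAlg_fill_unique[OF TY is_horn_map_horn[OF smap h]]
      thin is_filler_map_horn[OF smap h] UAlg_fill_thin_filler[OF TX h]
    by metis
  with smap show ?thesis
    unfolding is_AlgKan_morphism_def by blast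
qed

theorem mainTheorem9:
  fixes X :: "'a sset" and TX :: "nat \<Rightarrow> 'a set"
    and Y :: "'b sset" and TY :: "nat \<Rightarrow> 'b set"
    and f :: "nat \<Rightarrow> 'a \<Rightarrow> 'b"
  assumes "is_TComplex X TX" and "is_TComplex Y TY" and "is_sTCom_morphism X TX Y TY f"
  shows "is_AlgKan X (UAlg_fill X TX) \<and> is_AlgKan Y (UAlg_fill Y TY) \<and>
         is_AlgKan_morphism X (UAlg_fill X TX) Y (UAlg_fill Y TY) f \<and>
         (sTCom_fibration X TX Y TY f \<longrightarrow>
            AlgKan_fibration X (UAlg_fill X TX) Y (UAlg_fill Y TY) f) \<and>
         (sTCom_fibration X TX Y TY f \<and> sTCom_weq X TX Y TY f \<longrightarrow>
            AlgKan_fibration X (UAlg_fill X TX) Y (UAlg_fill Y TY) f \<and>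
            AlgKan_weq X (UAlg_fill X TX) Y (UAlg_fill Y TY) f)"
  using is_AlgKan_UAlg[OF assms(1)] is_AlgKan_UAlg[OF assms(2)]
    is_AlgKan_morphism_UAlg[OF assms]
  unfolding AlgKan_fibration_def AlgKan_weq_def sTCom_fibration_def sTCom_weq_def
  by blast

end
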